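(* There is an absolute constant $C$ such that for all integers $b\ge 0$ and $p\ge 1$, with $n=2^b$, there is an arithmetic circuit using at most $C\,p\binom{n}{\downarrow p}$ $\oplus$-gates that, for every commutative monoid $(S,\oplus,0)$ and every $f:\binom{[n]}{\downarrow p}\to S$, computes for every $y\in[n]$ the value $e(y)=\bigoplus_{X\in\binom{[n]}{\downarrow p},\ y\notin X} f(X)$. (In particular, taking $f(X)=0$ for $|X|<p$, this solves $(p,1)$-disjoint summation.)
   Context: $\binom{[n]}{\downarrow p}$ is the family of subsets of $[n]=\{1,\dots,n\}$ of size at most $p$, and $\binom{n}{\downarrow p}=\sum_{i=0}^{p}\binom{n}{i}$. An arithmetic circuit consists of input gates (one per $X$, evaluating to $f(X)$), constant gates evaluating to $0$, and binary $\oplus$-gates, with designated output gates (one per $y$); gate count refers to the number of $\oplus$-gates. *)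

theory Defs
  imports Complex_Main
begin

definition binom_down :: "nat \<Rightarrow> nat \<Rightarrow> nat" where
  "binom_down n p = (\<Sum>i\<le>p. n choose i)"

definition down_family :: "nat \<Rightarrow> nat \<Rightarrow> nat set set" where
  "down_family n p = {X. X \<subseteq> {1..n} \<and> card X \<le> p}"

text \<open>Gates of an arithmetic circuit. Gates are listed in topological order;
  a Plus gate refers to two earlier gates by their position in the list.\<close>
datatype gate = Input "nat set" | Const0 | Plus nat nat

fun gate_ok :: "nat \<Rightarrow> nat \<Rightarrow> nat \<Rightarrow> gate \<Rightarrow> bool" where
  "gate_ok n p k (Input X) = (X \<in> down_family n p)"
| "gate_ok n p k Const0 = True"
| "gate_ok n p k (Plus i j) = (i < k \<and> j < k)"

definition wf_circuit :: "nat \<Rightarrow> nat \<Rightarrow> gate list \<Rightarrow> bool" where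
  "wf_circuit n p gs = (\<forall>k < length gs. gate_ok n p k (gs ! k))"

fun is_plus :: "gate \<Rightarrow> bool" where
  "is_plus (Plus i j) = True"
| "is_plus _ = False"

definition plus_count :: "gate list \<Rightarrow> nat" where
  "plus_count gs = length (filter is_plus gs)"

fun gate_val :: "(nat set \<Rightarrow> 'a::comm_monoid_add) \<Rightarrow> 'a list \<Rightarrow> gate \<Rightarrow> 'a" where
  "gate_val f vs (Input X) = f X"
| "gate_val f vs Const0 = 0"
| "gate_val f vs (Plus i j) = vs ! i + vs ! j"

definition circ_vals :: "(nat set \<Rightarrow> 'a::comm_monoid_add) \<Rightarrow> gate list \<Rightarrow> 'a list" where
  "circ_vals f gs = foldl (\<lambda>vs g. vs @ [gate_val f vs g]) [] gs"

end

theory Submission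
  imports Defs
begin

(*
  Every gate of a circuit computes the sum of f over a family of input sets, its
  semantics.  If each plus gate adds two gates with disjoint semantics, then in any
  commutative monoid the value of a gate is the sum of f over its semantics
  (circ_vals_eq_sum).  The theorem therefore reduces to building, with few plus
  gates, a circuit whose semantics include the family {X. y \<notin> X} for every y.

  For p \<ge> 2 we refine along dyadic blocks: for every block B of level l and every
  Z \<subseteq> B with |Z| \<le> p we compute the trace class {X. X \<inter> B = Z}; the classes of a
  child block are disjoint unions of classes of its parent (trace_class_split).
  Level l costs 2^(l+1) * binom_down (2^(b-l)) p gates, in total at most
  14 * binom_down n p (dyadic_cost_le_binom_down), and at a leaf B = {y} the class
  of Z = {} is the required family.  For p = 1 this sum is of order n log n, so we
  combine prefix and suffix unions of singletons instead (avoiding_circuit_one).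
*)

(* The semantics of a gate: the family of input sets whose f-values it adds up,
   given the semantics of the earlier gates. *)
fun gate_sem :: "nat set set list \<Rightarrow> gate \<Rightarrow> nat set set" where
  "gate_sem Ss (Input X) = {X}"
| "gate_sem Ss Const0 = {}"
| "gate_sem Ss (Plus i j) = Ss ! i \<union> Ss ! j"

definition circ_sems :: "gate list \<Rightarrow> nat set set list" where
  "circ_sems gs = foldl (\<lambda>Ss g. Ss @ [gate_sem Ss g]) [] gs"

lemma circ_sems_Nil [simp]: "circ_sems [] = []"
  by (simp add: circ_sems_def)

lemma circ_sems_snoc: "circ_sems (gs @ [g]) = circ_sems gs @ [gate_sem (circ_sems gs) g]"
  by (simp add: circ_sems_def)

lemma length_circ_sems [simp]: "length (circ_sems gs) = length gs"
  by (induction gs rule: rev_induct) (simp_all add: circ_sems_snoc)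

lemma circ_vals_snoc:
  "circ_vals f (gs @ [g]) = circ_vals f gs @ [gate_val f (circ_vals f gs) g]"
  by (simp add: circ_vals_def)

lemma length_circ_vals [simp]: "length (circ_vals f gs) = length gs"
  by (induction gs rule: rev_induct) (simp_all add: circ_vals_snoc circ_vals_def)

lemma finite_down_family: "finite (down_family n p)"
  by (rule finite_subset[of _ "Pow {1..n}"]) (auto simp: down_family_def)

lemma wf_circuit_snoc:
  "wf_circuit n p (gs @ [g]) \<longleftrightarrow> wf_circuit n p gs \<and> gate_ok n p (length gs) g"
  unfolding wf_circuit_def by (auto simp: nth_append less_Suc_eq)

lemma plus_args_less:
  assumes "wf_circuit n p gs" "k < length gs" "gs ! k = Plus i j"
  shows "i < k" "j < k"
  using assms unfolding wf_circuit_def by (metis gate_ok.simps(3))+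

definition disjoint_circuit :: "nat \<Rightarrow> nat \<Rightarrow> gate list \<Rightarrow> bool" where
  "disjoint_circuit n p gs \<longleftrightarrow> wf_circuit n p gs \<and>
     (\<forall>k<length gs. \<forall>i j. gs ! k = Plus i j \<longrightarrow> circ_sems gs ! i \<inter> circ_sems gs ! j = {})"

(* Disjointness is checked gate by gate, since appending a gate does not change
   the semantics of the earlier ones. *)
lemma disjoint_circuit_snoc:
  "disjoint_circuit n p (gs @ [g]) \<longleftrightarrow> disjoint_circuit n p gs \<and> gate_ok n p (length gs) g \<and>
     (\<forall>i j. g = Plus i j \<longrightarrow> circ_sems gs ! i \<inter> circ_sems gs ! j = {})"
proof -
  have prefix: "circ_sems (gs @ [g]) ! i = circ_sems gs ! i" if "i < length gs" for i
    using that by (simp add: circ_sems_snoc nth_append)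
  have old: "circ_sems (gs @ [g]) ! i \<inter> circ_sems (gs @ [g]) ! j = circ_sems gs ! i \<inter> circ_sems gs ! j"
    if "wf_circuit n p gs" "k < length gs" "gs ! k = Plus i j" for k i j
    using plus_args_less[OF that] that(2) by (simp add: prefix)
  show ?thesis
  proof (cases "wf_circuit n p gs \<and> gate_ok n p (length gs) g")
    case True
    have new: "circ_sems (gs @ [Plus i j]) ! i \<inter> circ_sems (gs @ [Plus i j]) ! j
        = circ_sems gs ! i \<inter> circ_sems gs ! j" if "g = Plus i j" for i j
      using True that by (simp add: circ_sems_snoc nth_append)
    from True show ?thesis
      unfolding disjoint_circuit_def wf_circuit_snoc length_append_singleton less_Suc_eq
      by (simp add: all_conj_distrib nth_append old new disj_imp)
  qed (auto simp: disjoint_circuit_def wf_circuit_snoc)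
qed

lemma circ_sems_subset_inputs:
  "wf_circuit n p gs \<Longrightarrow> k < length gs \<Longrightarrow> circ_sems gs ! k \<subseteq> down_family n p"
proof (induction gs arbitrary: k rule: rev_induct)
  case (snoc g gs)
  then show ?case
    by (cases g) (fastforce simp: wf_circuit_snoc circ_sems_snoc nth_append less_Suc_eq)+
qed simp

lemma circ_vals_eq_sum:
  "disjoint_circuit n p gs \<Longrightarrow> k < length gs \<Longrightarrow> circ_vals f gs ! k = sum f (circ_sems gs ! k)"
proof (induction gs arbitrary: k rule: rev_induct)
  case (snoc g gs)
  have gs: "disjoint_circuit n p gs" "gate_ok n p (length gs) g"
    and disj: "\<And>i j. g = Plus i j \<Longrightarrow> circ_sems gs ! i \<inter> circ_sems gs ! j = {}"
    using snoc.prems(1) by (simp_all add: disjoint_circuit_snoc)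
  have fin: "finite (circ_sems gs ! i)" if "i < length gs" for i
    using circ_sems_subset_inputs[OF _ that] gs(1) finite_down_family finite_subset
    unfolding disjoint_circuit_def by metis
  consider "k < length gs" | "k = length gs" using snoc.prems(2) by fastforce
  then show ?case
  proof cases
    case 1
    then show ?thesis using snoc.IH[OF gs(1)] by (simp add: circ_vals_snoc circ_sems_snoc nth_append)
  next
    case 2
    show ?thesis
    proof (cases g)
      case (Plus i j)
      then have ij: "i < length gs" "j < length gs" using gs(2) by auto
      have "sum f (circ_sems gs ! i \<union> circ_sems gs ! j) = sum f (circ_sems gs ! i) + sum f (circ_sems gs ! j)"
        using sum.union_disjoint[OF fin[OF ij(1)] fin[OF ij(2)] disj[OF Plus]] .
      then show ?thesis
        using 2 Plus ij snoc.IH[OF gs(1)] by (simp add: circ_vals_snoc circ_sems_snoc nth_append)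
    qed (use 2 in \<open>simp_all add: circ_vals_snoc circ_sems_snoc nth_append\<close>)
  qed
qed simp

lemma outputs_for_families:
  assumes "disjoint_circuit n p gs" "\<forall>y\<in>Y. T y \<in> set (circ_sems gs)"
  shows "\<exists>out. \<forall>y\<in>Y. out y < length gs \<and> (\<forall>f. circ_vals f gs ! out y = sum f (T y))"
proof -
  define out where "out y = (SOME k. k < length gs \<and> circ_sems gs ! k = T y)" for y
  have found: "\<exists>k. k < length gs \<and> circ_sems gs ! k = T y" if "y \<in> Y" for y
    using assms(2) that in_set_conv_nth[of "T y" "circ_sems gs"] by auto
  have "out y < length gs \<and> circ_sems gs ! out y = T y" if "y \<in> Y" for y
    unfolding out_def by (rule someI_ex[OF found[OF that]])
  then show ?thesis using circ_vals_eq_sum[OF assms(1)] by metis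
qed

definition extends_within :: "nat \<Rightarrow> nat \<Rightarrow> nat \<Rightarrow> gate list \<Rightarrow> gate list \<Rightarrow> bool" where
  "extends_within n p c gs gs' \<longleftrightarrow> disjoint_circuit n p gs' \<and>
     plus_count gs' \<le> plus_count gs + c \<and> set (circ_sems gs) \<subseteq> set (circ_sems gs')"

lemma extends_refl: "disjoint_circuit n p gs \<Longrightarrow> extends_within n p 0 gs gs"
  by (simp add: extends_within_def)

lemma extends_trans:
  "extends_within n p c gs gs1 \<Longrightarrow> extends_within n p d gs1 gs2 \<Longrightarrow> extends_within n p (c + d) gs gs2"
  by (auto simp: extends_within_def)

lemma extends_mono: "extends_within n p c gs gs' \<Longrightarrow> c \<le> d \<Longrightarrow> extends_within n p d gs gs'"
  by (auto simp: extends_within_def)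

lemma extends_snoc:
  assumes "disjoint_circuit n p (gs @ [g])"
  shows "extends_within n p (if is_plus g then 1 else 0) gs (gs @ [g])"
    and "gate_sem (circ_sems gs) g \<in> set (circ_sems (gs @ [g]))"
  using assms by (auto simp: extends_within_def plus_count_def circ_sems_snoc)

lemma extends_for_all:
  assumes "finite K" "disjoint_circuit n p gs"
    and step: "\<And>k gs1. k \<in> K \<Longrightarrow> disjoint_circuit n p gs1 \<Longrightarrow>
       set (circ_sems gs) \<subseteq> set (circ_sems gs1) \<Longrightarrow>
       \<exists>gs2. extends_within n p (c k) gs1 gs2 \<and> F k \<subseteq> set (circ_sems gs2)"
  shows "\<exists>gs'. extends_within n p (\<Sum>k\<in>K. c k) gs gs' \<and> (\<forall>k\<in>K. F k \<subseteq> set (circ_sems gs'))"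
  using assms(1) step
proof (induction K rule: finite_induct)
  case empty
  then show ?case using extends_refl[OF assms(2)] by auto
next
  case (insert x K)
  obtain gs1 where gs1: "extends_within n p (\<Sum>k\<in>K. c k) gs gs1" "\<forall>k\<in>K. F k \<subseteq> set (circ_sems gs1)"
    using insert.IH insert.prems by blast
  obtain gs2 where gs2: "extends_within n p (c x) gs1 gs2" "F x \<subseteq> set (circ_sems gs2)"
    using insert.prems[of x gs1] gs1(1) unfolding extends_within_def by blast
  have "extends_within n p (\<Sum>k\<in>insert x K. c k) gs gs2"
    using extends_trans[OF gs1(1) gs2(1)] insert.hyps by (simp add: add.commute)
  moreover have "\<forall>k\<in>insert x K. F k \<subseteq> set (circ_sems gs2)"
    using gs1(2) gs2 unfolding extends_within_def by blast
  ultimately show ?case by blast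
qed

lemma all_inputs: "\<exists>gs. extends_within n p 0 [] gs \<and> (\<forall>X\<in>down_family n p. {X} \<in> set (circ_sems gs))"
proof -
  have "\<exists>gs. extends_within n p (\<Sum>X\<in>down_family n p. 0) [] gs \<and>
      (\<forall>X\<in>down_family n p. {{X}} \<subseteq> set (circ_sems gs))"
  proof (rule extends_for_all[where c = "\<lambda>X. 0" and F = "\<lambda>X. {{X}}"])
    fix X gs1 assume "X \<in> down_family n p" "disjoint_circuit n p gs1"
    then have "disjoint_circuit n p (gs1 @ [Input X])" by (simp add: disjoint_circuit_snoc)
    from extends_snoc[OF this]
    show "\<exists>gs2. extends_within n p 0 gs1 gs2 \<and> {{X}} \<subseteq> set (circ_sems gs2)" by auto
  qed (simp_all add: finite_down_family disjoint_circuit_def wf_circuit_def)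
  then show ?thesis by auto
qed

(* The union of k pairwise disjoint computed families costs k plus gates
   (a zero gate followed by k additions). *)
lemma add_disjoint_union:
  assumes "disjoint_circuit n p gs" "finite \<A>" "\<A> \<subseteq> set (circ_sems gs)" "pairwise disjnt \<A>"
  shows "\<exists>gs'. extends_within n p (card \<A>) gs gs' \<and> \<Union>\<A> \<in> set (circ_sems gs')"
  using assms(2-4)
proof (induction \<A> rule: finite_induct)
  case empty
  have "disjoint_circuit n p (gs @ [Const0])" using assms(1) by (simp add: disjoint_circuit_snoc)
  from extends_snoc[OF this] show ?case by auto
next
  case (insert A \<A>)
  obtain gs1 where gs1: "extends_within n p (card \<A>) gs gs1" "\<Union>\<A> \<in> set (circ_sems gs1)"
    using insert.IH insert.prems by (auto simp: pairwise_insert)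
  have "A \<in> set (circ_sems gs1)" using insert.prems(1) gs1(1) by (auto simp: extends_within_def)
  then obtain a u where a: "a < length gs1" "circ_sems gs1 ! a = A"
    and u: "u < length gs1" "circ_sems gs1 ! u = \<Union>\<A>"
    using gs1(2) by (metis in_set_conv_nth length_circ_sems)
  have "A \<inter> \<Union>\<A> = {}"
    using insert.prems(2) insert.hyps(2) by (auto simp: pairwise_insert disjnt_def)
  then have "disjoint_circuit n p (gs1 @ [Plus a u])"
    using gs1(1) a u by (simp add: disjoint_circuit_snoc extends_within_def)
  from extends_snoc[OF this] a u
  have ext: "extends_within n p 1 gs1 (gs1 @ [Plus a u])"
    and mem: "\<Union>(insert A \<A>) \<in> set (circ_sems (gs1 @ [Plus a u]))"
    by simp_all
  have "extends_within n p (card (insert A \<A>)) gs (gs1 @ [Plus a u])"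
    using extends_trans[OF gs1(1) ext] insert.hyps by simp
  with mem show ?case by blast
qed

(* All prefix unions of a sequence of m pairwise disjoint computed families cost
   only 2m plus gates, each one being obtained from the previous one. *)
lemma add_prefix_unions:
  assumes "disjoint_circuit n p gs" "\<forall>k<m. A k \<in> set (circ_sems gs)"
    "\<forall>k<m. \<forall>k'<m. k \<noteq> k' \<longrightarrow> A k \<inter> A k' = {}"
  shows "\<exists>gs'. extends_within n p (2 * m) gs gs' \<and> (\<forall>i\<le>m. (\<Union>k<i. A k) \<in> set (circ_sems gs'))"
  using assms(2,3)
proof (induction m)
  case 0
  from add_disjoint_union[OF assms(1), of "{}"] show ?case by simp
next
  case (Suc m)
  have "\<forall>k<m. A k \<in> set (circ_sems gs)" "\<forall>k<m. \<forall>k'<m. k \<noteq> k' \<longrightarrow> A k \<inter> A k' = {}"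
    using Suc.prems by simp_all
  then obtain gs1 where gs1: "extends_within n p (2 * m) gs gs1"
    "\<forall>i\<le>m. (\<Union>k<i. A k) \<in> set (circ_sems gs1)"
    using Suc.IH by blast
  let ?\<A> = "{\<Union>k<m. A k, A m}"
  have "?\<A> \<subseteq> set (circ_sems gs1)" using gs1 Suc.prems(1) by (auto simp: extends_within_def)
  moreover have "A m \<inter> A k = {}" if "k < m" for k
    using Suc.prems(2) that by (metis less_Suc_eq less_irrefl)
  then have "pairwise disjnt ?\<A>" by (auto simp: pairwise_insert disjnt_def)
  ultimately obtain gs2 where gs2: "extends_within n p (card ?\<A>) gs1 gs2" "\<Union>?\<A> \<in> set (circ_sems gs2)"
    using add_disjoint_union[of n p gs1 ?\<A>] gs1(1) by (auto simp: extends_within_def)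
  have "extends_within n p (2 * Suc m) gs gs2"
    using extends_trans[OF gs1(1) extends_mono[OF gs2(1)], of 2] by (simp add: card_insert_le_m1)
  moreover have "\<forall>i\<le>Suc m. (\<Union>k<i. A k) \<in> set (circ_sems gs2)"
    using gs1(2) gs2 by (auto simp: le_Suc_eq lessThan_Suc extends_within_def Un_commute)
  ultimately show ?case by blast
qed

lemma card_subsets_upto:
  assumes "finite A"
  shows "card {Z. Z \<subseteq> A \<and> card Z \<le> p} = binom_down (card A) p"
proof -
  have eq: "{Z. Z \<subseteq> A \<and> card Z \<le> p} = (\<Union>i\<in>{..p}. {Z. Z \<subseteq> A \<and> card Z = i})" by auto
  have "card (\<Union>i\<in>{..p}. {Z. Z \<subseteq> A \<and> card Z = i}) = (\<Sum>i\<le>p. card {Z. Z \<subseteq> A \<and> card Z = i})"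
    by (rule card_UN_disjoint) (use assms in auto)
  also have "\<dots> = (\<Sum>i\<le>p. card A choose i)" using n_subsets[OF assms] by simp
  finally show ?thesis using eq by (simp add: binom_down_def)
qed

(* Counting the subsets Y of C \<union> D (disjoint) with |Y| \<le> p by their traces Z on C:
   this is the number of pairs (Z, W) used in one refinement step. *)
lemma sum_card_extensions:
  assumes "finite C" "finite D" "C \<inter> D = {}"
  shows "(\<Sum>Z\<in>{Z. Z \<subseteq> C \<and> card Z \<le> p}. card {W. W \<subseteq> D \<and> card (Z \<union> W) \<le> p})
       = card {Y. Y \<subseteq> C \<union> D \<and> card Y \<le> p}"
proof -
  let ?S = "{Z. Z \<subseteq> C \<and> card Z \<le> p}"
  let ?E = "\<lambda>Z. {W. W \<subseteq> D \<and> card (Z \<union> W) \<le> p}"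
  have "(\<Sum>Z\<in>?S. card (?E Z)) = card (SIGMA Z:?S. ?E Z)"
    using assms by (intro card_SigmaI[symmetric]) auto
  also have "\<dots> = card ((\<lambda>(Z, W). Z \<union> W) ` (SIGMA Z:?S. ?E Z))"
  proof (rule card_image[symmetric], rule inj_onI, clarify)
    fix Z1 W1 Z2 W2
    assume "Z1 \<subseteq> C" "W1 \<subseteq> D" "Z2 \<subseteq> C" "W2 \<subseteq> D" "Z1 \<union> W1 = Z2 \<union> W2"
    then show "Z1 = Z2 \<and> W1 = W2" using assms(3) by blast
  qed
  also have "(\<lambda>(Z, W). Z \<union> W) ` (SIGMA Z:?S. ?E Z) = {Y. Y \<subseteq> C \<union> D \<and> card Y \<le> p}"
  proof (rule set_eqI, rule iffI)
    fix Y assume Y: "Y \<in> {Y. Y \<subseteq> C \<union> D \<and> card Y \<le> p}"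
    then have "finite Y" using assms(1,2) finite_subset by blast
    then have "card (Y \<inter> C) \<le> card Y" by (intro card_mono) auto
    moreover have "Y \<inter> C \<union> Y \<inter> D = Y" using Y by auto
    ultimately have "(Y \<inter> C, Y \<inter> D) \<in> (SIGMA Z:?S. ?E Z)" using Y by auto
    then show "Y \<in> (\<lambda>(Z, W). Z \<union> W) ` (SIGMA Z:?S. ?E Z)"
      using \<open>Y \<inter> C \<union> Y \<inter> D = Y\<close> by (metis (no_types, lifting) case_prod_conv image_eqI)
  qed auto
  finally show ?thesis .
qed

lemma binomial_le_mult_pred:
  assumes "i \<ge> 2" shows "2 * (h choose i) \<le> h * (h choose (i - 1))"
proof -
  have "2 * (h choose i) \<le> i * (h choose i)" using assms by simp
  also have "\<dots> = h * ((h - 1) choose (i - 1))"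
    using assms by (intro times_binomial_minus1_eq) simp
  also have "\<dots> \<le> h * (h choose (i - 1))" by (simp add: binomial_right_mono)
  finally show ?thesis .
qed

lemma binomial_double_ge:
  assumes "i \<ge> 2" shows "4 * (h choose i) \<le> (2 * h) choose i"
proof -
  let ?f = "\<lambda>k. (h choose k) * (h choose (i - k))"
  have "(2 * h) choose i = (\<Sum>k\<le>i. ?f k)" using vandermonde[of h h i] by (simp add: mult_2)
  moreover have "(\<Sum>k\<in>{0, 1, i}. ?f k) \<le> (\<Sum>k\<le>i. ?f k)"
    by (rule sum_mono2) (use assms in auto)
  moreover have "(\<Sum>k\<in>{0, 1, i}. ?f k) = (h choose i) + h * (h choose (i - 1)) + (h choose i)"
    using assms by simp
  ultimately show ?thesis using binomial_le_mult_pred[OF assms, of h] by linarith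
qed

lemma binom_down_double: "4 * binom_down h p \<le> binom_down (2 * h) p + 2 * h + 3"
proof (induction p)
  case (Suc p)
  show ?case
  proof (cases p)
    case (Suc q)
    then have "4 * (h choose Suc p) \<le> (2 * h) choose Suc p" by (intro binomial_double_ge) simp
    then show ?thesis using Suc.IH by (simp add: binom_down_def)
  qed (simp add: binom_down_def)
qed (simp add: binom_down_def)

(* The number of plus gates used by the dyadic refinement over b levels. *)
definition dyadic_cost :: "nat \<Rightarrow> nat \<Rightarrow> nat" where
  "dyadic_cost p b = (\<Sum>k<b. 2^(k + 1) * binom_down (2^(b - k)) p)"

lemma dyadic_cost_Suc: "dyadic_cost p (Suc b) = 2 * binom_down (2^Suc b) p + 2 * dyadic_cost p b"
proof -
  have "dyadic_cost p (Suc b) = 2 * binom_down (2^Suc b) p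
      + (\<Sum>k<b. 2^(Suc k + 1) * binom_down (2^(Suc b - Suc k)) p)"
    unfolding dyadic_cost_def sum.lessThan_Suc_shift by simp
  also have "(\<Sum>k<b. 2^(Suc k + 1) * binom_down (2^(Suc b - Suc k)) p) = 2 * dyadic_cost p b"
    unfolding dyadic_cost_def sum_distrib_left by (rule sum.cong) auto
  finally show ?thesis .
qed

(* The dyadic cost is a geometric sum dominated by its last term. *)
lemma dyadic_cost_le: "dyadic_cost p b \<le> 4 * binom_down (2^b) p + 5 * b * 2^b"
proof (induction b)
  case (Suc b)
  have double: "8 * binom_down (2^b) p \<le> 2 * binom_down (2^Suc b) p + 10 * 2^b"
    using binom_down_double[of "2^b" p] one_le_power[of "2::nat" b] unfolding power_Suc by linarith
  have "dyadic_cost p (Suc b) \<le> 2 * binom_down (2^Suc b) p + 8 * binom_down (2^b) p + 10 * b * 2^b"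
    using Suc.IH by (simp add: dyadic_cost_Suc)
  also have "\<dots> \<le> 4 * binom_down (2^Suc b) p + 5 * Suc b * 2^Suc b"
    using double by (simp add: algebra_simps)
  finally show ?case .
qed (simp add: dyadic_cost_def)

(* For p \<ge> 2 the term b * 2^b is absorbed by binom_down (2^b) p \<ge> 2^b choose 2. *)
lemma dyadic_cost_le_binom_down:
  assumes "p \<ge> 2" shows "dyadic_cost p b \<le> 14 * binom_down (2^b) p"
proof -
  let ?n = "(2::nat)^b"
  have "?n choose 2 \<le> binom_down ?n p"
    unfolding binom_down_def using assms by (intro member_le_sum) auto
  moreover have "2 * (?n choose 2) = ?n * (?n - 1)"
    using times_binomial_minus1_eq[of 2 ?n] by simp
  moreover have "b \<le> ?n - 1" using less_exp[of b] by arith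
  then have "b * ?n \<le> ?n * (?n - 1)" by simp
  ultimately have "b * ?n \<le> 2 * binom_down ?n p" by linarith
  then show ?thesis using dyadic_cost_le[of p b] by simp
qed

definition trace_class :: "nat \<Rightarrow> nat \<Rightarrow> nat set \<Rightarrow> nat set \<Rightarrow> nat set set" where
  "trace_class n p B Z = {X \<in> down_family n p. X \<inter> B = Z}"

lemma down_family_card: "X \<in> down_family n p \<Longrightarrow> finite X \<and> card X \<le> p"
  unfolding down_family_def using finite_subset by auto

lemma trace_class_split:
  assumes "C \<subseteq> P" "Z \<subseteq> C"
  shows "trace_class n p C Z
      = (\<Union>W\<in>{W. W \<subseteq> P - C \<and> card (Z \<union> W) \<le> p}. trace_class n p P (Z \<union> W))"
proof (rule set_eqI, rule iffI)
  fix X assume "X \<in> trace_class n p C Z"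
  then have X: "X \<in> down_family n p" "X \<inter> C = Z" by (auto simp: trace_class_def)
  have "X \<inter> P = Z \<union> X \<inter> (P - C)" using X(2) assms by auto
  moreover have "card (X \<inter> P) \<le> p"
    using down_family_card[OF X(1)] card_mono[of X "X \<inter> P"] by (meson inf_le1 le_trans)
  ultimately show "X \<in> (\<Union>W\<in>{W. W \<subseteq> P - C \<and> card (Z \<union> W) \<le> p}. trace_class n p P (Z \<union> W))"
    using X by (auto simp: trace_class_def intro!: bexI[of _ "X \<inter> (P - C)"])
next
  fix X assume "X \<in> (\<Union>W\<in>{W. W \<subseteq> P - C \<and> card (Z \<union> W) \<le> p}. trace_class n p P (Z \<union> W))"
  then obtain W where W: "W \<subseteq> P - C" "X \<in> down_family n p" "X \<inter> P = Z \<union> W"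
    by (auto simp: trace_class_def)
  have "X \<inter> C = (X \<inter> P) \<inter> C" using assms by auto
  also have "\<dots> = Z" using W(1,3) assms by auto
  finally show "X \<in> trace_class n p C Z" using W by (simp add: trace_class_def)
qed

lemma trace_classes_disjoint:
  assumes "Z \<subseteq> C"
  shows "pairwise disjnt ((\<lambda>W. trace_class n p P (Z \<union> W)) ` {W. W \<subseteq> P - C \<and> card (Z \<union> W) \<le> p})"
proof (rule pairwise_imageI)
  fix W1 W2 assume "W1 \<in> {W. W \<subseteq> P - C \<and> card (Z \<union> W) \<le> p}" "W2 \<in> {W. W \<subseteq> P - C \<and> card (Z \<union> W) \<le> p}"
    "W1 \<noteq> W2"
  then have "Z \<union> W1 \<noteq> Z \<union> W2" using assms by blast
  then show "disjnt (trace_class n p P (Z \<union> W1)) (trace_class n p P (Z \<union> W2))"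
    by (auto simp: trace_class_def disjnt_def)
qed

lemma refine_trace_class:
  assumes "disjoint_circuit n p gs" "finite P" "C \<subseteq> P" "Z \<subseteq> C"
    and coarse: "\<forall>Y. Y \<subseteq> P \<and> card Y \<le> p \<longrightarrow> trace_class n p P Y \<in> set (circ_sems gs)"
  shows "\<exists>gs'. extends_within n p (card {W. W \<subseteq> P - C \<and> card (Z \<union> W) \<le> p}) gs gs' \<and>
    trace_class n p C Z \<in> set (circ_sems gs')"
proof -
  let ?E = "{W. W \<subseteq> P - C \<and> card (Z \<union> W) \<le> p}"
  let ?\<A> = "(\<lambda>W. trace_class n p P (Z \<union> W)) ` ?E"
  have fin_E: "finite ?E" using assms(2) by simp
  have sub: "?\<A> \<subseteq> set (circ_sems gs)"
  proof (rule image_subsetI)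
    fix W assume "W \<in> ?E"
    then have "Z \<union> W \<subseteq> P" "card (Z \<union> W) \<le> p" using assms(3,4) by auto
    then show "trace_class n p P (Z \<union> W) \<in> set (circ_sems gs)" using coarse by blast
  qed
  obtain gs' where gs': "extends_within n p (card ?\<A>) gs gs'" "\<Union>?\<A> \<in> set (circ_sems gs')"
    using add_disjoint_union[OF assms(1) finite_imageI[OF fin_E] sub
        trace_classes_disjoint[OF assms(4)]] by blast
  have "extends_within n p (card ?E) gs gs'"
    using extends_mono[OF gs'(1) card_image_le[OF fin_E]] .
  moreover have "\<Union>?\<A> = trace_class n p C Z"
    using trace_class_split[OF assms(3,4)] by simp
  ultimately show ?thesis using gs'(2) by auto
qed

lemma refine_trace_classes:
  assumes "disjoint_circuit n p gs" "finite P" "C \<subseteq> P"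
    and coarse: "\<forall>Y. Y \<subseteq> P \<and> card Y \<le> p \<longrightarrow> trace_class n p P Y \<in> set (circ_sems gs)"
  shows "\<exists>gs'. extends_within n p (binom_down (card P) p) gs gs' \<and>
    (\<forall>Z. Z \<subseteq> C \<and> card Z \<le> p \<longrightarrow> trace_class n p C Z \<in> set (circ_sems gs'))"
proof -
  let ?S = "{Z. Z \<subseteq> C \<and> card Z \<le> p}"
  let ?E = "\<lambda>Z. {W. W \<subseteq> P - C \<and> card (Z \<union> W) \<le> p}"
  have fin: "finite C" "finite (P - C)" using assms(2,3) finite_subset by auto
  have "finite ?S" using fin(1) by (intro finite_subset[of ?S "Pow C"]) auto
  then have "\<exists>gs'. extends_within n p (\<Sum>Z\<in>?S. card (?E Z)) gs gs' \<and>
      (\<forall>Z\<in>?S. {trace_class n p C Z} \<subseteq> set (circ_sems gs'))"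
  proof (rule extends_for_all[OF _ assms(1), where c = "\<lambda>Z. card (?E Z)"
        and F = "\<lambda>Z. {trace_class n p C Z}"])
    fix Z gs1 assume "Z \<in> ?S" "disjoint_circuit n p gs1" "set (circ_sems gs) \<subseteq> set (circ_sems gs1)"
    with refine_trace_class[of n p gs1 P C Z] assms(2,3) coarse
    show "\<exists>gs2. extends_within n p (card (?E Z)) gs1 gs2 \<and> {trace_class n p C Z} \<subseteq> set (circ_sems gs2)"
      by blast
  qed
  then obtain gs' where gs': "extends_within n p (\<Sum>Z\<in>?S. card (?E Z)) gs gs'"
    "\<forall>Z\<in>?S. {trace_class n p C Z} \<subseteq> set (circ_sems gs')"
    by blast
  have "C \<union> (P - C) = P" using assms(3) by blast
  then have "(\<Sum>Z\<in>?S. card (?E Z)) = binom_down (card P) p"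
    using sum_card_extensions[OF fin, of p] card_subsets_upto[OF assms(2)] by simp
  with gs' show ?thesis by auto
qed

definition block :: "nat \<Rightarrow> nat \<Rightarrow> nat \<Rightarrow> nat set" where
  "block b l j = {j * 2^(b - l) + 1 .. (j + 1) * 2^(b - l)}"

lemma card_block: "card (block b l j) = 2^(b - l)"
  by (simp add: block_def)

lemma finite_block: "finite (block b l j)"
  by (simp add: block_def)

lemma block_root: "block b 0 0 = {1..2^b}"
  by (simp add: block_def)

lemma block_leaf: "block b b j = {j + 1}"
  by (simp add: block_def)

lemma block_child_subset:
  assumes "l < b" shows "block b (Suc l) j \<subseteq> block b l (j div 2)"
proof -
  obtain m :: nat where m: "2^(b - l) = 2 * m" "2^(b - Suc l) = m"
    using assms by (metis Suc_diff_Suc power_Suc)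
  have "j div 2 * (2 * m) \<le> j * m" using div_times_less_eq_dividend[of j 2] by (metis mult.assoc mult_le_mono1 mult.commute)
  moreover have "(j + 1) * m \<le> (j div 2 + 1) * (2 * m)"
    using mult_le_mono1[of "j + 1" "2 * (j div 2) + 2" m] by (simp add: algebra_simps)
  ultimately show ?thesis unfolding block_def m by auto
qed

definition level_computed :: "nat \<Rightarrow> nat \<Rightarrow> nat \<Rightarrow> gate list \<Rightarrow> bool" where
  "level_computed b p l gs \<longleftrightarrow> (\<forall>j<2^l. \<forall>Z. Z \<subseteq> block b l j \<and> card Z \<le> p \<longrightarrow>
     trace_class (2^b) p (block b l j) Z \<in> set (circ_sems gs))"

(* Passing from level l to level l + 1 refines each of the 2^(l+1) child blocks
   from its parent. *)
lemma level_step: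
  assumes "l < b" "disjoint_circuit (2^b) p gs" "level_computed b p l gs"
  shows "\<exists>gs'. extends_within (2^b) p (2^(l + 1) * binom_down (2^(b - l)) p) gs gs' \<and>
    level_computed b p (Suc l) gs'"
proof -
  let ?F = "\<lambda>j. {trace_class (2^b) p (block b (Suc l) j) Z | Z. Z \<subseteq> block b (Suc l) j \<and> card Z \<le> p}"
  have "\<exists>gs'. extends_within (2^b) p (\<Sum>j<2^Suc l. binom_down (card (block b l (j div 2))) p) gs gs' \<and>
      (\<forall>j::nat\<in>{..<2^Suc l}. ?F j \<subseteq> set (circ_sems gs'))"
  proof (rule extends_for_all[where c = "\<lambda>j. binom_down (card (block b l (j div 2))) p" and F = ?F])
    fix j :: nat and gs1 assume j: "j \<in> {..<2^Suc l}" and gs1: "disjoint_circuit (2^b) p gs1"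
      "set (circ_sems gs) \<subseteq> set (circ_sems gs1)"
    have "j div 2 < 2^l" using j by simp
    then have "\<forall>Y. Y \<subseteq> block b l (j div 2) \<and> card Y \<le> p \<longrightarrow>
        trace_class (2^b) p (block b l (j div 2)) Y \<in> set (circ_sems gs1)"
      using assms(3) gs1(2) unfolding level_computed_def by blast
    from refine_trace_classes[OF gs1(1) finite_block block_child_subset[OF assms(1)] this]
    show "\<exists>gs2. extends_within (2^b) p (binom_down (card (block b l (j div 2))) p) gs1 gs2 \<and>
        ?F j \<subseteq> set (circ_sems gs2)"
      by blast
  qed (use assms(2) in simp_all)
  then obtain gs' where gs': "extends_within (2^b) p (\<Sum>j<2^Suc l. binom_down (card (block b l (j div 2))) p) gs gs'"
    "\<forall>j::nat\<in>{..<2^Suc l}. ?F j \<subseteq> set (circ_sems gs')"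
    by blast
  have "(\<Sum>j<(2::nat)^Suc l. binom_down (card (block b l (j div 2))) p) = 2^(l + 1) * binom_down (2^(b - l)) p"
    by (simp add: card_block)
  moreover have "level_computed b p (Suc l) gs'"
    unfolding level_computed_def using gs'(2) by blast
  ultimately show ?thesis using gs'(1) by auto
qed

(* Levels 0 to l are computed from scratch by iterated refinement; at level 0 the
   trace classes are singletons. *)
lemma level_circuit:
  assumes "l \<le> b"
  shows "\<exists>gs. extends_within (2^b) p (\<Sum>k<l. 2^(k + 1) * binom_down (2^(b - k)) p) [] gs \<and>
    level_computed b p l gs"
  using assms
proof (induction l)
  case 0
  obtain gs where gs: "extends_within (2^b) p 0 [] gs"
    "\<forall>X\<in>down_family (2^b) p. {X} \<in> set (circ_sems gs)"
    using all_inputs by blast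
  have "trace_class (2^b) p (block b 0 0) Z = {Z}" if "Z \<in> down_family (2^b) p" for Z
    using that by (auto simp: trace_class_def down_family_def block_root)
  then have "level_computed b p 0 gs"
    using gs(2) unfolding level_computed_def by (simp add: block_root down_family_def)
  with gs(1) show ?case by auto
next
  case (Suc l)
  then obtain gs where gs: "extends_within (2^b) p (\<Sum>k<l. 2^(k + 1) * binom_down (2^(b - k)) p) [] gs"
    "level_computed b p l gs" by auto
  with level_step[of l b p gs] Suc.prems obtain gs' where
    "extends_within (2^b) p (2^(l + 1) * binom_down (2^(b - l)) p) gs gs'" "level_computed b p (Suc l) gs'"
    by (auto simp: extends_within_def)
  with extends_trans[OF gs(1)] show ?case by auto
qed

(* For p \<ge> 2, the leaf classes give every family {X. y \<notin> X} within
   14 * binom_down n p plus gates. *)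
lemma avoiding_circuit_dyadic:
  assumes "p \<ge> 2"
  shows "\<exists>gs. extends_within (2^b) p (14 * binom_down (2^b) p) [] gs \<and>
    (\<forall>y\<in>{1..2^b}. {X \<in> down_family (2^b) p. y \<notin> X} \<in> set (circ_sems gs))"
proof -
  obtain gs where gs: "extends_within (2^b) p (dyadic_cost p b) [] gs" "level_computed b p b gs"
    using level_circuit[of b b p] unfolding dyadic_cost_def by blast
  have "trace_class (2^b) p (block b b (y - 1)) {} \<in> set (circ_sems gs)" if "y \<in> {1..2^b}" for y
    using gs(2) that unfolding level_computed_def by force
  moreover have "trace_class (2^b) p (block b b (y - 1)) {} = {X \<in> down_family (2^b) p. y \<notin> X}"
    if "y \<in> {1..2^b}" for y
    using that by (auto simp: trace_class_def block_leaf)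
  ultimately show ?thesis
    using extends_mono[OF gs(1) dyadic_cost_le_binom_down[OF assms]] by auto
qed

lemma down_family_one: "down_family n 1 = insert {} ((\<lambda>x. {x}) ` {1..n})"
proof (rule set_eqI, rule iffI)
  fix X assume X: "X \<in> down_family n 1"
  then have X_fin: "finite X" "card X \<le> 1" and X_sub: "X \<subseteq> {1..n}"
    using down_family_card[OF X] by (simp_all add: down_family_def)
  show "X \<in> insert {} ((\<lambda>x. {x}) ` {1..n})"
  proof (cases "X = {}")
    case False
    then obtain x where "x \<in> X" by blast
    moreover have "\<forall>a\<in>X. \<forall>b\<in>X. a = b" using X_fin card_le_Suc0_iff_eq[OF X_fin(1)] by simp
    ultimately have "X = {x}" by blast
    then show ?thesis using X_sub by auto
  qed simp
qed (auto simp: down_family_def)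

lemma avoiding_singletons_split:
  assumes "y \<in> {1..n}"
  shows "{X \<in> down_family n 1. y \<notin> X} = {{}} \<union> (\<Union>k<y - 1. {{Suc k}}) \<union> (\<Union>k<n - y. {{n - k}})"
proof -
  have "{X \<in> down_family n 1. y \<notin> X} = insert {} ((\<lambda>x. {x}) ` ({1..n} - {y}))"
    unfolding down_family_one by blast
  also have "{1..n} - {y} = Suc ` {..<y - 1} \<union> (\<lambda>k. n - k) ` {..<n - y}"
  proof (rule set_eqI)
    fix x
    have "x \<in> Suc ` {..<y - 1} \<longleftrightarrow> 1 \<le> x \<and> x < y"
      by (cases x) auto
    moreover have "x \<in> (\<lambda>k. n - k) ` {..<n - y} \<longleftrightarrow> y < x \<and> x \<le> n"
    proof
      assume "y < x \<and> x \<le> n"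
      then show "x \<in> (\<lambda>k. n - k) ` {..<n - y}" by (intro image_eqI[of x _ "n - x"]) auto
    qed auto
    ultimately show "x \<in> {1..n} - {y} \<longleftrightarrow> x \<in> Suc ` {..<y - 1} \<union> (\<lambda>k. n - k) ` {..<n - y}"
      using assms by auto
  qed
  finally show ?thesis by blast
qed

lemma singleton_prefix_suffix_circuit:
  "\<exists>gs. extends_within n 1 (4 * n) [] gs \<and> {{}} \<in> set (circ_sems gs) \<and>
     (\<forall>i\<le>n. (\<Union>k<i. {{Suc k}}) \<in> set (circ_sems gs)) \<and>
     (\<forall>i\<le>n. (\<Union>k<i. {{n - k}}) \<in> set (circ_sems gs))"
proof -
  obtain gs0 where gs0: "extends_within n 1 0 [] gs0" "\<forall>X\<in>down_family n 1. {X} \<in> set (circ_sems gs0)"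
    using all_inputs by blast
  have singleton: "{{x}} \<in> set (circ_sems gs0)" if "x \<in> {1..n}" for x
  proof -
    have "{x} \<in> down_family n 1" using that by (simp add: down_family_def)
    then show ?thesis using gs0(2) by blast
  qed
  have "\<forall>k<n. {{Suc k}} \<in> set (circ_sems gs0)" using singleton by simp
  then obtain gs1 where gs1: "extends_within n 1 (2 * n) gs0 gs1"
    "\<forall>i\<le>n. (\<Union>k<i. {{Suc k}}) \<in> set (circ_sems gs1)"
    using add_prefix_unions[of n 1 gs0 n "\<lambda>k. {{Suc k}}"] gs0(1) by (auto simp: extends_within_def)
  have "\<forall>k<n. {{n - k}} \<in> set (circ_sems gs1)"
    using singleton gs1(1) by (force simp: extends_within_def)
  then obtain gs2 where gs2: "extends_within n 1 (2 * n) gs1 gs2"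
    "\<forall>i\<le>n. (\<Union>k<i. {{n - k}}) \<in> set (circ_sems gs2)"
    using add_prefix_unions[of n 1 gs1 n "\<lambda>k. {{n - k}}"] gs1(1) by (auto simp: extends_within_def)
  have "extends_within n 1 (4 * n) [] gs2"
    using extends_trans[OF extends_trans[OF gs0(1) gs1(1)] gs2(1)] by simp
  moreover have "{{}} \<in> set (circ_sems gs0)" using gs0(2) by (simp add: down_family_def)
  ultimately show ?thesis
    using gs1 gs2 unfolding extends_within_def by (intro exI[of _ gs2]) blast
qed

lemma add_avoiding_family_one:
  assumes "disjoint_circuit n 1 gs" "y \<in> {1..n}" "{{}} \<in> set (circ_sems gs)"
    "(\<Union>k<y - 1. {{Suc k}}) \<in> set (circ_sems gs)" "(\<Union>k<n - y. {{n - k}}) \<in> set (circ_sems gs)"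
  shows "\<exists>gs'. extends_within n 1 3 gs gs' \<and> {X \<in> down_family n 1. y \<notin> X} \<in> set (circ_sems gs')"
proof -
  let ?\<A> = "{{{}}, \<Union>k<y - 1. {{Suc k}}, \<Union>k<n - y. {{n - k}}}"
  have sub: "?\<A> \<subseteq> set (circ_sems gs)" using assms(3-5) by blast
  have "(\<Union>k<y - 1. {{Suc k}}) \<inter> (\<Union>k<n - y. {{n - k}}) = {}" using assms(2) by auto
  then have disj: "pairwise disjnt ?\<A>" unfolding pairwise_insert disjnt_def by auto
  obtain gs' where gs': "extends_within n 1 (card ?\<A>) gs gs'" "\<Union>?\<A> \<in> set (circ_sems gs')"
    using add_disjoint_union[OF assms(1) _ sub disj] by blast
  have "card ?\<A> \<le> 3" by (intro card_insert_le_m1) simp_all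
  then have "extends_within n 1 3 gs gs'" using extends_mono[OF gs'(1)] by blast
  moreover have "\<Union>?\<A> = {X \<in> down_family n 1. y \<notin> X}"
    using avoiding_singletons_split[OF assms(2)] by (simp add: Un_assoc)
  ultimately show ?thesis using gs'(2) by auto
qed

lemma avoiding_circuit_one:
  "\<exists>gs. extends_within n 1 (7 * n) [] gs \<and> (\<forall>y\<in>{1..n}. {X \<in> down_family n 1. y \<notin> X} \<in> set (circ_sems gs))"
proof -
  obtain gs0 where gs0: "extends_within n 1 (4 * n) [] gs0" "{{}} \<in> set (circ_sems gs0)"
    "\<forall>i\<le>n. (\<Union>k<i. {{Suc k}}) \<in> set (circ_sems gs0)" "\<forall>i\<le>n. (\<Union>k<i. {{n - k}}) \<in> set (circ_sems gs0)"
    using singleton_prefix_suffix_circuit by blast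
  have "\<exists>gs. extends_within n 1 (\<Sum>y\<in>{1..n}. 3) gs0 gs \<and>
      (\<forall>y\<in>{1..n}. {{X \<in> down_family n 1. y \<notin> X}} \<subseteq> set (circ_sems gs))"
  proof (rule extends_for_all[where c = "\<lambda>y. 3" and F = "\<lambda>y. {{X \<in> down_family n 1. y \<notin> X}}"])
    fix y gs1 assume y: "y \<in> {1..n}" and gs1: "disjoint_circuit n 1 gs1"
      "set (circ_sems gs0) \<subseteq> set (circ_sems gs1)"
    have "y - 1 \<le> n" "n - y \<le> n" using y by auto
    then have "(\<Union>k<y - 1. {{Suc k}}) \<in> set (circ_sems gs1)" "(\<Union>k<n - y. {{n - k}}) \<in> set (circ_sems gs1)"
      using gs0(3,4) gs1(2) by blast+
    with add_avoiding_family_one[OF gs1(1) y] gs0(2) gs1(2)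
    show "\<exists>gs2. extends_within n 1 3 gs1 gs2 \<and> {{X \<in> down_family n 1. y \<notin> X}} \<subseteq> set (circ_sems gs2)"
      by blast
  qed (use gs0(1) in \<open>simp_all add: extends_within_def\<close>)
  then obtain gs where gs: "extends_within n 1 (3 * n) gs0 gs"
      "\<forall>y\<in>{1..n}. {X \<in> down_family n 1. y \<notin> X} \<in> set (circ_sems gs)"
    by (auto simp: mult.commute)
  have "extends_within n 1 (4 * n + 3 * n) [] gs"
    by (rule extends_trans[OF gs0(1) gs(1)])
  then show ?thesis using gs(2) by auto
qed

lemma avoiding_circuit:
  assumes "p \<ge> 1"
  shows "\<exists>gs. extends_within (2^b) p (14 * binom_down (2^b) p) [] gs \<and>
    (\<forall>y\<in>{1..2^b}. {X \<in> down_family (2^b) p. y \<notin> X} \<in> set (circ_sems gs))"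
proof (cases "p = 1")
  case True
  have "7 * 2^b \<le> 14 * binom_down (2^b) 1" by (simp add: binom_down_def)
  with avoiding_circuit_one[of "2^b"] True show ?thesis using extends_mono by blast
qed (use assms avoiding_circuit_dyadic in simp)

theorem mainTheorem8:
  shows "\<exists>C::real. \<forall>b p::nat. p \<ge> 1 \<longrightarrow>
    (\<exists>(gs::gate list) (out::nat \<Rightarrow> nat).
       wf_circuit (2^b) p gs \<and>
       (\<forall>y\<in>{1..2^b}. out y < length gs) \<and>
       real (plus_count gs) \<le> C * real p * real (binom_down (2^b) p) \<and>
       (\<forall>(f::nat set \<Rightarrow> 'a::comm_monoid_add). \<forall>y\<in>{1..2^b}.
          circ_vals f gs ! out y = (\<Sum>X\<in>{X \<in> down_family (2^b) p. y \<notin> X}. f X)))"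
proof (intro exI[of _ 14] allI impI)
  fix b p :: nat assume "p \<ge> 1"
  then obtain gs where gs: "extends_within (2^b) p (14 * binom_down (2^b) p) [] gs"
    "\<forall>y\<in>{1..2^b}. {X \<in> down_family (2^b) p. y \<notin> X} \<in> set (circ_sems gs)"
    using avoiding_circuit by blast
  then have circuit: "disjoint_circuit (2^b) p gs"
    and gates: "plus_count gs \<le> 14 * binom_down (2^b) p"
    by (simp_all add: extends_within_def plus_count_def)
  have "14 * binom_down (2^b) p \<le> 14 * p * binom_down (2^b) p" using \<open>p \<ge> 1\<close> by simp
  with gates have "real (plus_count gs) \<le> real (14 * p * binom_down (2^b) p)"
    using le_trans of_nat_mono by blast
  then have cost: "real (plus_count gs) \<le> 14 * real p * real (binom_down (2^b) p)" by simp
  obtain out where out: "\<forall>y\<in>{1..2^b}. out y < length gs \<and>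
      (\<forall>f::nat set \<Rightarrow> 'a. circ_vals f gs ! out y = (\<Sum>X\<in>{X \<in> down_family (2^b) p. y \<notin> X}. f X))"
    using outputs_for_families[OF circuit gs(2)] by blast
  show "\<exists>gs out. wf_circuit (2^b) p gs \<and> (\<forall>y\<in>{1..2^b}. out y < length gs) \<and>
      real (plus_count gs) \<le> 14 * real p * real (binom_down (2^b) p) \<and>
      (\<forall>f::nat set \<Rightarrow> 'a. \<forall>y\<in>{1..2^b}.
          circ_vals f gs ! out y = (\<Sum>X\<in>{X \<in> down_family (2^b) p. y \<notin> X}. f X))"
    using circuit cost out unfolding disjoint_circuit_def by blast
qed

end
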